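(* Consider the protocol ABBBA described in the context, with $n\ge 3t+1$, in which every honest node receives an input pair $(a,b)\in\{0,1\}^2$. Then: (i) (Conditional termination) If the inputs satisfy the condition "if some honest node has $b=1$, then at least $t+1$ honest nodes have $a=1$", then every honest node eventually outputs a value and terminates. (ii) (Biased validity) If at least $t+1$ honest nodes have $b=1$, then every honest node that terminates outputs $1$. (iii) (Biased integrity) If some honest node outputs $1$, then at least one honest node has input $a=1$ or $b=1$.
   Context: Model: $n$ nodes in an asynchronous network (messages between honest nodes are eventually delivered, with arbitrary delay), at most $t$ of which are Byzantine (controlled by an adaptive adversary), $n\ge 3t+1$. Protocol ABBBA (asynchronous biased binary Byzantine agreement), code for an honest node with input $(a,b)\in\{0,1\}^2$: initialize counters $c_a=c_b=c_c=0$. Send $(\mathrm{VALUE},a,b)$ to all nodes. If $a=1$ or $b=1$, output $1$ and terminate. Otherwise wait until one of: $c_a\ge t+1$, $c_b\ge t+1$, or $c_c\ge n-t$; if $c_a\ge t+1$ or $c_b\ge t+1$, output $1$ and terminate; else (i.e. $c_c\ge n-t$) output $0$ and terminate. Counter updates: upon receiving the first message $(\mathrm{VALUE},a',b')$ with $a',b'\in\{0,1\}$ from a given node, set $c_a\leftarrow c_a+a'$, $c_b\leftarrow c_b+b'$, and if $b'=0$ set $c_c\leftarrow c_c+1$ (later VALUE messages from the same node are ignored). *)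

theory Defs
  imports Main
begin

text \<open>Nodes are 0,...,n-1.  Time is discrete (nat).
  rt i j = Some s : receiver i processes, at time s, the first well-formed
  VALUE message from sender j; rt i j = None : no such message is ever processed.
  v i j = (a', b') : the bits carried by that message (True = 1).
  For an honest sender j, v i j = (a j, b j); for a Byzantine sender it is arbitrary.\<close>

definition cnt ::
  "(nat \<Rightarrow> nat \<Rightarrow> nat option) \<Rightarrow> (nat \<Rightarrow> nat \<Rightarrow> bool \<times> bool) \<Rightarrow> nat \<Rightarrow> nat \<Rightarrow> nat
     \<Rightarrow> (bool \<times> bool \<Rightarrow> bool) \<Rightarrow> nat" where
  "cnt rt v n i \<tau> P = card {j \<in> {..<n}. \<exists>s. rt i j = Some s \<and> s \<le> \<tau> \<and> P (v i j)}"

definition c_a where "c_a rt v n i \<tau> = cnt rt v n i \<tau> fst"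
definition c_b where "c_b rt v n i \<tau> = cnt rt v n i \<tau> snd"
definition c_c where "c_c rt v n i \<tau> = cnt rt v n i \<tau> (\<lambda>p. \<not> snd p)"

definition wait_done where
  "wait_done n t rt v i \<tau> \<longleftrightarrow>
     c_a rt v n i \<tau> \<ge> t + 1 \<or> c_b rt v n i \<tau> \<ge> t + 1 \<or> c_c rt v n i \<tau> \<ge> n - t"

text \<open>Output of honest node i with inputs a i, b i (None = never terminates).\<close>
definition abbba_output ::
  "nat \<Rightarrow> nat \<Rightarrow> (nat \<Rightarrow> bool) \<Rightarrow> (nat \<Rightarrow> bool) \<Rightarrow> (nat \<Rightarrow> nat \<Rightarrow> nat option)
     \<Rightarrow> (nat \<Rightarrow> nat \<Rightarrow> bool \<times> bool) \<Rightarrow> nat \<Rightarrow> nat option" where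
  "abbba_output n t a b rt v i =
     (if a i \<or> b i then Some 1
      else if \<exists>\<tau>. wait_done n t rt v i \<tau> then
        (let \<tau>0 = (LEAST \<tau>. wait_done n t rt v i \<tau>) in
           if c_a rt v n i \<tau>0 \<ge> t + 1 \<or> c_b rt v n i \<tau>0 \<ge> t + 1 then Some 1 else Some 0)
      else None)"

text \<open>Admissible executions: Byz is the set of (ever) corrupted nodes, H the honest ones.\<close>
definition abbba_exec ::
  "nat \<Rightarrow> nat \<Rightarrow> nat set \<Rightarrow> (nat \<Rightarrow> bool) \<Rightarrow> (nat \<Rightarrow> bool) \<Rightarrow> (nat \<Rightarrow> nat \<Rightarrow> nat option)
     \<Rightarrow> (nat \<Rightarrow> nat \<Rightarrow> bool \<times> bool) \<Rightarrow> bool" where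
  "abbba_exec n t Byz a b rt v \<longleftrightarrow>
     Byz \<subseteq> {..<n} \<and> card Byz \<le> t \<and>
     (\<forall>i \<in> {..<n} - Byz. \<forall>j \<in> {..<n} - Byz. rt i j \<noteq> None \<and> v i j = (a j, b j)) \<and>
     (\<forall>i \<in> {..<n} - Byz. \<forall>j \<in> {..<n}. \<forall>k \<in> {..<n}. \<forall>s.
         j \<noteq> k \<longrightarrow> rt i j = Some s \<longrightarrow> rt i k \<noteq> Some s)"

end

theory Submission
  imports Defs
begin

text \<open>Only honest senders are guaranteed to deliver their true inputs, and there are at
  least n - t of them; more than t reports of a bit cannot all come from Byzantine nodes.
  Termination: once all honest messages have arrived, either some honest node has b = 1,
  and then the t + 1 honest a-votes close the wait, or every honest node reports b = 0
  and the n - t honest reports close it through c_c.  Validity: with t + 1 honest b-votes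
  at most n - t - 1 senders can ever report b = 0, so the branch that outputs 0 is never
  taken.  Integrity: an output 1 is justified either by the node's own input or by t + 1
  reports of a 1, one of which comes from an honest node.\<close>

lemma abbba_output_neq_None:
  assumes "wait_done n t rt v i \<tau>"
  shows "abbba_output n t a b rt v i \<noteq> None"
  using assms unfolding abbba_output_def by (auto simp: Let_def)

lemma abbba_output_in_None_Some_1:
  assumes "\<And>\<tau>. c_c rt v n i \<tau> < n - t"
  shows "abbba_output n t a b rt v i \<in> {None, Some 1}"
proof (cases "\<exists>\<tau>. wait_done n t rt v i \<tau>")
  case True
  then have "wait_done n t rt v i (LEAST \<tau>. wait_done n t rt v i \<tau>)" by (rule LeastI_ex)
  with assms show ?thesis unfolding abbba_output_def wait_done_def Let_def
    by (simp add: not_le[symmetric])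
qed (auto simp: abbba_output_def)

lemma abbba_output_Some_1_cases:
  assumes "abbba_output n t a b rt v i = Some 1"
  shows "a i \<or> b i \<or> (\<exists>\<tau>. c_a rt v n i \<tau> \<ge> t + 1 \<or> c_b rt v n i \<tau> \<ge> t + 1)"
  using assms unfolding abbba_output_def Let_def by (auto split: if_splits)

locale abbba_execution =
  fixes n t :: nat and Byz :: "nat set" and a b :: "nat \<Rightarrow> bool"
    and rt :: "nat \<Rightarrow> nat \<Rightarrow> nat option" and v :: "nat \<Rightarrow> nat \<Rightarrow> bool \<times> bool"
  assumes exec: "abbba_exec n t Byz a b rt v"
begin

abbreviation honest :: "nat set" where
  "honest \<equiv> {..<n} - Byz"

lemma Byz_subset: "Byz \<subseteq> {..<n}"
  and card_Byz_le: "card Byz \<le> t"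
  and honest_delivered: "i \<in> honest \<Longrightarrow> j \<in> honest \<Longrightarrow> rt i j \<noteq> None"
  and honest_value: "i \<in> honest \<Longrightarrow> j \<in> honest \<Longrightarrow> v i j = (a j, b j)"
  using exec unfolding abbba_exec_def by blast+

lemma card_honest_ge: "card honest \<ge> n - t"
proof -
  have "card honest = n - card Byz"
    using Byz_subset by (simp add: card_Diff_subset finite_subset)
  with card_Byz_le show ?thesis by linarith
qed

lemma honest_delivery_time:
  assumes "i \<in> honest"
  obtains \<tau> where "\<And>j. j \<in> honest \<Longrightarrow> \<exists>s. rt i j = Some s \<and> s \<le> \<tau>"
proof
  fix j assume j: "j \<in> honest"
  obtain s where s: "rt i j = Some s" using honest_delivered[OF assms j] by blast
  moreover have "s \<le> Max ((\<lambda>j. the (rt i j)) ` honest)"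
    using j s by (intro Max_ge) force+
  ultimately show "\<exists>s. rt i j = Some s \<and> s \<le> Max ((\<lambda>j. the (rt i j)) ` honest)" by blast
qed

lemma card_honest_le_cnt:
  assumes "i \<in> honest" and delivered: "\<And>j. j \<in> honest \<Longrightarrow> \<exists>s. rt i j = Some s \<and> s \<le> \<tau>"
  shows "card {j \<in> honest. P (a j, b j)} \<le> cnt rt v n i \<tau> P"
  unfolding cnt_def
proof (rule card_mono)
  show "{j \<in> honest. P (a j, b j)} \<subseteq> {j \<in> {..<n}. \<exists>s. rt i j = Some s \<and> s \<le> \<tau> \<and> P (v i j)}"
    using delivered honest_value[OF assms(1)] by fastforce
qed simp

lemma cnt_le_n_minus_honest_dissent:
  assumes "i \<in> honest"
  shows "cnt rt v n i \<tau> P \<le> n - card {j \<in> honest. \<not> P (a j, b j)}"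
proof -
  let ?D = "{j \<in> honest. \<not> P (a j, b j)}"
  have "cnt rt v n i \<tau> P \<le> card ({..<n} - ?D)"
    unfolding cnt_def by (rule card_mono) (use honest_value[OF assms] in auto)
  also have "\<dots> = n - card ?D" by (subst card_Diff_subset) auto
  finally show ?thesis .
qed

lemma honest_witness_of_cnt:
  assumes "i \<in> honest" and "cnt rt v n i \<tau> P \<ge> t + 1"
  shows "\<exists>j \<in> honest. P (a j, b j)"
proof -
  let ?S = "{j \<in> {..<n}. \<exists>s. rt i j = Some s \<and> s \<le> \<tau> \<and> P (v i j)}"
  have "\<not> ?S \<subseteq> Byz"
  proof
    assume "?S \<subseteq> Byz"
    then have "card ?S \<le> card Byz" using Byz_subset by (simp add: card_mono finite_subset)
    with assms(2) card_Byz_le show False unfolding cnt_def by linarith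
  qed
  then obtain j where "j \<in> ?S" "j \<in> honest" by blast
  then show ?thesis using honest_value[OF assms(1)] by auto
qed

theorem conditional_termination:
  assumes cond: "(\<exists>j \<in> honest. b j) \<longrightarrow> card {j \<in> honest. a j} \<ge> t + 1"
    and i: "i \<in> honest"
  shows "abbba_output n t a b rt v i \<noteq> None"
proof -
  obtain \<tau> where delivered: "\<And>j. j \<in> honest \<Longrightarrow> \<exists>s. rt i j = Some s \<and> s \<le> \<tau>"
    using honest_delivery_time[OF i] by blast
  have "wait_done n t rt v i \<tau>"
  proof (cases "\<exists>j \<in> honest. b j")
    case True
    then have "t + 1 \<le> card {j \<in> honest. a j}" using cond by blast
    also have "\<dots> \<le> c_a rt v n i \<tau>"
      unfolding c_a_def using card_honest_le_cnt[OF i delivered, of fst] by simp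
    finally show ?thesis unfolding wait_done_def by blast
  next
    case False
    then have "honest = {j \<in> honest. \<not> b j}" by blast
    then have "n - t \<le> card {j \<in> honest. \<not> b j}" using card_honest_ge by simp
    also have "\<dots> \<le> c_c rt v n i \<tau>"
      unfolding c_c_def using card_honest_le_cnt[OF i delivered, of "\<lambda>p. \<not> snd p"] by simp
    finally show ?thesis unfolding wait_done_def by blast
  qed
  then show ?thesis by (rule abbba_output_neq_None)
qed

theorem biased_validity:
  assumes "n \<ge> t + 1" and votes: "card {j \<in> honest. b j} \<ge> t + 1" and i: "i \<in> honest"
  shows "abbba_output n t a b rt v i \<in> {None, Some 1}"
proof (rule abbba_output_in_None_Some_1)
  fix \<tau>
  have "c_c rt v n i \<tau> \<le> n - card {j \<in> honest. b j}"
    unfolding c_c_def using cnt_le_n_minus_honest_dissent[OF i, of \<tau> "\<lambda>p. \<not> snd p"] by simp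
  with assms(1) votes show "c_c rt v n i \<tau> < n - t" by linarith
qed

theorem biased_integrity:
  assumes "i \<in> honest" and "abbba_output n t a b rt v i = Some 1"
  shows "\<exists>j \<in> honest. a j \<or> b j"
  using abbba_output_Some_1_cases[OF assms(2)] assms(1)
    honest_witness_of_cnt[OF assms(1), of _ fst] honest_witness_of_cnt[OF assms(1), of _ snd]
  unfolding c_a_def c_b_def by fastforce

end

theorem lemma8:
  fixes n t :: nat and Byz :: "nat set" and a b :: "nat \<Rightarrow> bool"
    and rt :: "nat \<Rightarrow> nat \<Rightarrow> nat option" and v :: "nat \<Rightarrow> nat \<Rightarrow> bool \<times> bool"
  assumes "n \<ge> 3 * t + 1"
    and "abbba_exec n t Byz a b rt v"
  shows "(((\<exists>j \<in> {..<n} - Byz. b j) \<longrightarrow> card {j \<in> {..<n} - Byz. a j} \<ge> t + 1)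
           \<longrightarrow> (\<forall>i \<in> {..<n} - Byz. abbba_output n t a b rt v i \<noteq> None))
         \<and> (card {j \<in> {..<n} - Byz. b j} \<ge> t + 1
           \<longrightarrow> (\<forall>i \<in> {..<n} - Byz. abbba_output n t a b rt v i \<in> {None, Some 1}))
         \<and> ((\<exists>i \<in> {..<n} - Byz. abbba_output n t a b rt v i = Some 1)
           \<longrightarrow> (\<exists>j \<in> {..<n} - Byz. a j \<or> b j))"
proof -
  interpret abbba_execution n t Byz a b rt v by unfold_locales (fact assms(2))
  have "n \<ge> t + 1" using assms(1) by linarith
  then show ?thesis
    using conditional_termination biased_validity biased_integrity by blast
qed

end
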